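(* Let $\Sigma_g$ be a closed oriented surface of genus $g\ge2$ and $\tau$ a graph on $\Sigma_g$ (with any number of vertices) which lifts to a triangulation of the universal cover, with edge set $E$. Then the inclusion map of the cross ratio parameter space $\mathcal{C}_\tau$ into $\mathbb{R}^E$ is proper.
   Context: For $\mathbf{c}:E\to\mathbb{R}$ and a vertex $v$ of $\tau$ of valence $m$, list the edge-ends incident to $v$ in clockwise order as $e_1,\dots,e_m$ (an edge with both endpoints at $v$ contributes two entries), set $x_i=\mathbf{c}(e_i)$, $A_i=\begin{pmatrix}0&1\\-1&x_i\end{pmatrix}$, and $W_j=A_1\cdots A_j=\begin{pmatrix}a_j&b_j\\c_j&d_j\end{pmatrix}$. The conditions at $v$ are: (1) $W_m=-I$; (2) $a_j<0$, $c_j<0$, $b_j>0$, $d_j>0$ for $1\le j\le m-1$, except that $a_1=0$ and $d_{m-1}=0$ (no inequality imposed on these). The cross ratio parameter space is $\mathcal{C}_\tau=\{\mathbf{c}\in\mathbb{R}^E\mid \mathbf{c}\text{ satisfies (1) and (2) at every vertex}\}$. *)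

theory Defs
  imports "HOL-Analysis.Analysis"
begin

text \<open>Combinatorial model of a graph tau cellularly embedded in a closed oriented surface
  (a rotation system / ribbon graph).  Edges are the elements of a finite type 'e; every
  edge has two ends (darts) (e,True) and (e,False).  The permutation sigma sends a dart to
  the next dart clockwise around its vertex; vertices are the sigma-orbits, faces are the
  orbits of sigma o flip.\<close>

type_synonym 'e dart = "'e \<times> bool"

definition flip :: "'e dart \<Rightarrow> 'e dart" where
  "flip d = (fst d, \<not> snd d)"

definition orb :: "('a \<Rightarrow> 'a) \<Rightarrow> 'a \<Rightarrow> 'a set" where
  "orb f x = range (\<lambda>n. (f ^^ n) x)"

definition face_perm :: "('e dart \<Rightarrow> 'e dart) \<Rightarrow> 'e dart \<Rightarrow> 'e dart" where
  "face_perm \<sigma> = \<sigma> \<circ> flip"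

definition surface_graph_triangular :: "nat \<Rightarrow> ('e::finite dart \<Rightarrow> 'e dart) \<Rightarrow> bool" where
  "surface_graph_triangular g \<sigma> \<longleftrightarrow>
     bij \<sigma> \<and>
     (\<forall>d d'. (d, d') \<in> ({(x, \<sigma> x) | x. True} \<union> {(x, flip x) | x. True})\<^sup>*) \<and>
     (\<forall>d. card (orb (face_perm \<sigma>) d) = 3) \<and>
     int (card (range (orb \<sigma>))) - int CARD('e) + int (card (range (orb (face_perm \<sigma>))))
       = 2 - 2 * int g"

fun path_ok :: "('e dart \<Rightarrow> 'e dart) \<Rightarrow> 'e dart set \<Rightarrow> 'e dart list \<Rightarrow> 'e dart set \<Rightarrow> bool" where
  "path_ok \<sigma> v [] w \<longleftrightarrow> v = w"
| "path_ok \<sigma> v (d # ds) w \<longleftrightarrow> orb \<sigma> d = v \<and> path_ok \<sigma> (orb \<sigma> (flip d)) ds w"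

text \<open>Elementary homotopies: inserting a backtrack or the boundary of a (triangular) face.\<close>
inductive hstep :: "('e dart \<Rightarrow> 'e dart) \<Rightarrow> 'e dart list \<Rightarrow> 'e dart list \<Rightarrow> bool" for \<sigma> where
  backtrack: "hstep \<sigma> (xs @ ys) (xs @ [d, flip d] @ ys)"
| face: "hstep \<sigma> (xs @ ys) (xs @ [d, face_perm \<sigma> d, face_perm \<sigma> (face_perm \<sigma> d)] @ ys)"

definition homotopic_paths_rel ::
  "('e dart \<Rightarrow> 'e dart) \<Rightarrow> 'e dart set \<Rightarrow> 'e dart set \<Rightarrow> 'e dart list \<Rightarrow> 'e dart list \<Rightarrow> bool" where
  "homotopic_paths_rel \<sigma> v w p q \<longleftrightarrow>
     (p, q) \<in> {(a, b). (hstep \<sigma> a b \<or> hstep \<sigma> b a) \<and> path_ok \<sigma> v a w \<and> path_ok \<sigma> v b w}\<^sup>*"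

definition nullhomotopic :: "('e dart \<Rightarrow> 'e dart) \<Rightarrow> 'e dart set \<Rightarrow> 'e dart list \<Rightarrow> bool" where
  "nullhomotopic \<sigma> v p \<longleftrightarrow> path_ok \<sigma> v p v \<and> homotopic_paths_rel \<sigma> v v p []"

text \<open>The lift of tau to the universal cover is a (simplicial) triangulation: no lifted edge
  is a loop and no two distinct lifted edges join the same pair of vertices.\<close>
definition lifts_to_triangulation :: "('e dart \<Rightarrow> 'e dart) \<Rightarrow> bool" where
  "lifts_to_triangulation \<sigma> \<longleftrightarrow>
     (\<forall>d. \<not> nullhomotopic \<sigma> (orb \<sigma> d) [d]) \<and>
     (\<forall>d1 d2. d2 \<noteq> flip d1 \<longrightarrow> \<not> nullhomotopic \<sigma> (orb \<sigma> d1) [d1, d2])"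

definition Amat :: "real \<Rightarrow> real^2^2" where
  "Amat x = vector [vector [0, 1], vector [-1, x]]"

fun Wprod :: "(nat \<Rightarrow> real) \<Rightarrow> nat \<Rightarrow> real^2^2" where
  "Wprod x 0 = mat 1"
| "Wprod x (Suc j) = Wprod x j ** Amat (x (Suc j))"

text \<open>Conditions (1),(2) at the vertex of d0, listing edge-ends clockwise starting at d0:
  e_i = sigma^(i-1) d0, x_i = c(e_i), m = valence.\<close>
definition vertex_conditions :: "('e dart \<Rightarrow> 'e dart) \<Rightarrow> ('e \<Rightarrow> real) \<Rightarrow> 'e dart \<Rightarrow> bool" where
  "vertex_conditions \<sigma> c d0 \<longleftrightarrow>
     (let m = card (orb \<sigma> d0);
          x = (\<lambda>i. c (fst ((\<sigma> ^^ (i - 1)) d0)));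
          W = Wprod x
      in W m = - mat 1 \<and>
         (\<forall>j\<in>{1..m - 1}.
            (j \<noteq> 1 \<longrightarrow> W j $ 1 $ 1 < 0) \<and> W j $ 2 $ 1 < 0 \<and>
            W j $ 1 $ 2 > 0 \<and> (j \<noteq> m - 1 \<longrightarrow> W j $ 2 $ 2 > 0)))"

definition cross_ratio_space :: "('e dart \<Rightarrow> 'e dart) \<Rightarrow> ('e \<Rightarrow> real) set" where
  "cross_ratio_space \<sigma> = {c. \<forall>d0. vertex_conditions \<sigma> c d0}"

end

theory Submission
  imports Defs
begin

text \<open>The inclusion of a subset of \<open>\<real>\<^sup>E\<close> is proper exactly when the subset is closed, and
  the conditions defining \<open>\<C>\<^sub>\<tau>\<close> are continuous in \<open>c\<close>; only the strict inequalities could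
  be lost in a limit.  They are not: \<open>W\<^sub>m = -I\<close> forces \<open>d\<^sub>m\<^sub>-\<^sub>1 = 0\<close>, so the weak
  inequalities give \<open>a\<^sub>j d\<^sub>j \<le> 0\<close> and, as \<open>det W\<^sub>j = 1\<close>, \<open>b\<^sub>j c\<^sub>j \<le> -1\<close>; hence
  \<open>b\<^sub>j > 0 > c\<^sub>j\<close>, and then \<open>a\<^sub>j = -b\<^sub>j\<^sub>-\<^sub>1 < 0\<close> and \<open>d\<^sub>j = -c\<^sub>j\<^sub>+\<^sub>1 > 0\<close>.\<close>

lemma Amat_entries [simp]:
  "Amat x $ 1 $ 1 = 0" "Amat x $ 1 $ 2 = 1" "Amat x $ 2 $ 1 = -1" "Amat x $ 2 $ 2 = x"
  by (simp_all add: Amat_def)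

lemma Wprod_Suc_entries:
  "Wprod x (Suc j) $ 1 $ 1 = - Wprod x j $ 1 $ 2"
  "Wprod x (Suc j) $ 1 $ 2 = Wprod x j $ 1 $ 1 + Wprod x j $ 1 $ 2 * x (Suc j)"
  "Wprod x (Suc j) $ 2 $ 1 = - Wprod x j $ 2 $ 2"
  "Wprod x (Suc j) $ 2 $ 2 = Wprod x j $ 2 $ 1 + Wprod x j $ 2 $ 2 * x (Suc j)"
  by (simp_all add: matrix_matrix_mult_def sum_2)

lemma Wprod_1_offdiag: "Wprod x 1 $ 1 $ 2 = 1" "Wprod x 1 $ 2 $ 1 = -1"
  using Wprod_Suc_entries[of x 0] by (simp_all add: mat_def)

lemma det_Wprod:
  "Wprod x j $ 1 $ 1 * Wprod x j $ 2 $ 2 - Wprod x j $ 1 $ 2 * Wprod x j $ 2 $ 1 = 1"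
proof (induction j)
  case 0
  then show ?case by (simp add: mat_def)
next
  case (Suc j)
  then show ?case unfolding Wprod_Suc_entries by (simp add: algebra_simps)
qed

definition sign_pattern :: "(real \<Rightarrow> real \<Rightarrow> bool) \<Rightarrow> (nat \<Rightarrow> real^2^2) \<Rightarrow> nat \<Rightarrow> bool" where
  "sign_pattern R W m \<longleftrightarrow>
     (\<forall>j\<in>{1..m - 1}. (j \<noteq> 1 \<longrightarrow> R (W j $ 1 $ 1) 0) \<and> R (W j $ 2 $ 1) 0 \<and>
        R 0 (W j $ 1 $ 2) \<and> (j \<noteq> m - 1 \<longrightarrow> R 0 (W j $ 2 $ 2)))"

lemma sign_pattern_mono:
  "sign_pattern R W m \<Longrightarrow> (\<And>s t. R s t \<Longrightarrow> R' s t) \<Longrightarrow> sign_pattern R' W m"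
  unfolding sign_pattern_def by blast

lemma vertex_conditions_iff_sign_pattern:
  "vertex_conditions \<sigma> c d0 \<longleftrightarrow>
     (let m = card (orb \<sigma> d0); W = Wprod (\<lambda>i. c (fst ((\<sigma> ^^ (i - 1)) d0)))
      in W m = - mat 1 \<and> sign_pattern (<) W m)"
  unfolding vertex_conditions_def sign_pattern_def Let_def by simp

lemma sign_pattern_strict_if_weak:
  fixes x :: "nat \<Rightarrow> real"
  assumes closing: "Wprod x m = - mat 1" and weak: "sign_pattern (\<le>) (Wprod x) m"
  shows "sign_pattern (<) (Wprod x) m"
proof -
  let ?W = "Wprod x"
  have weak_at: "(j \<noteq> 1 \<longrightarrow> ?W j $ 1 $ 1 \<le> 0) \<and> ?W j $ 2 $ 1 \<le> 0 \<and>
      0 \<le> ?W j $ 1 $ 2 \<and> (j \<noteq> m - 1 \<longrightarrow> 0 \<le> ?W j $ 2 $ 2)" if "j \<in> {1..m - 1}" for j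
    using weak that unfolding sign_pattern_def by blast
  have d_nonneg: "0 \<le> ?W j $ 2 $ 2" if j: "j \<in> {1..m - 1}" for j
  proof (cases "j = m - 1")
    case True
    with j have "Suc j = m" by auto
    then have "?W j $ 2 $ 2 = - ?W m $ 2 $ 1" using Wprod_Suc_entries(3)[of x j] by simp
    then show ?thesis using closing by (simp add: mat_def)
  qed (use weak_at[OF j] in blast)
  have offdiag: "0 < ?W j $ 1 $ 2 \<and> ?W j $ 2 $ 1 < 0" if j: "j \<in> {1..m - 1}" for j
  proof (cases "j = 1")
    case True
    then show ?thesis using Wprod_1_offdiag by simp
  next
    case False
    have "?W j $ 1 $ 1 * ?W j $ 2 $ 2 \<le> 0"
      using weak_at[OF j] False d_nonneg[OF j] by (simp add: mult_nonpos_nonneg)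
    then have "?W j $ 1 $ 2 * ?W j $ 2 $ 1 \<le> -1" using det_Wprod[of x j] by linarith
    then have "?W j $ 1 $ 2 \<noteq> 0" "?W j $ 2 $ 1 \<noteq> 0" by auto
    then show ?thesis using weak_at[OF j] by linarith
  qed
  show ?thesis
    unfolding sign_pattern_def
  proof (intro ballI conjI impI)
    fix j assume j: "j \<in> {1..m - 1}"
    show "?W j $ 2 $ 1 < 0" "0 < ?W j $ 1 $ 2" using offdiag[OF j] by auto
    show "?W j $ 1 $ 1 < 0" if "j \<noteq> 1"
    proof -
      from j that have "Suc (j - 1) = j" "j - 1 \<in> {1..m - 1}" by auto
      then show ?thesis using Wprod_Suc_entries(1)[of x "j - 1"] offdiag[of "j - 1"] by simp
    qed
    show "0 < ?W j $ 2 $ 2" if "j \<noteq> m - 1"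
      using Wprod_Suc_entries(3)[of x j] offdiag[of "Suc j"] j that by auto
  qed
qed

lemma vertex_conditions_iff_weak:
  "vertex_conditions \<sigma> c d0 \<longleftrightarrow>
     (let m = card (orb \<sigma> d0); W = Wprod (\<lambda>i. c (fst ((\<sigma> ^^ (i - 1)) d0)))
      in W m = - mat 1 \<and> sign_pattern (\<le>) W m)"
  unfolding vertex_conditions_iff_sign_pattern Let_def
  using sign_pattern_strict_if_weak sign_pattern_mono[of "(<)" _ _ "(\<le>)"] by force

lemma continuous_on_Wprod_entry:
  assumes "\<And>i. continuous_on S (\<lambda>c. X c i)"
  shows "continuous_on S (\<lambda>c. Wprod (X c) j $ a $ b)"
proof (induction j arbitrary: a b)
  case 0
  then show ?case by (simp add: mat_def)
next
  case (Suc j)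
  from exhaust_2[of a] exhaust_2[of b] show ?case
    by (elim disjE; simp only: Wprod_Suc_entries; intro continuous_intros Suc assms)
qed

lemma closed_Wprod_conditions:
  fixes X :: "'a::topological_space \<Rightarrow> nat \<Rightarrow> real"
  assumes "\<And>i. continuous_on UNIV (\<lambda>c. X c i)"
  shows "closed {c. Wprod (X c) m = - mat 1 \<and> sign_pattern (\<le>) (Wprod (X c)) m}"
proof -
  note entry_continuous = continuous_on_Wprod_entry[OF assms]
  have "closed {c. \<forall>a b. Wprod (X c) m $ a $ b = (- mat 1 :: real^2^2) $ a $ b}"
    by (intro closed_Collect_all closed_Collect_eq continuous_intros entry_continuous)
  moreover have "closed {c. sign_pattern (\<le>) (Wprod (X c)) m}"
    unfolding sign_pattern_def Ball_def
    by (intro closed_Collect_all closed_Collect_imp closed_Collect_conj open_Collect_const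
        closed_Collect_le continuous_intros entry_continuous)
  ultimately show ?thesis
    by (simp only: vec_eq_iff closed_Collect_conj)
qed

lemma closed_cross_ratio_space: "closed (cross_ratio_space \<sigma>)"
proof -
  have "cross_ratio_space \<sigma> = (\<Inter>d0. {c. let m = card (orb \<sigma> d0);
      W = Wprod (\<lambda>i. c (fst ((\<sigma> ^^ (i - 1)) d0))) in W m = - mat 1 \<and> sign_pattern (\<le>) W m})"
    unfolding cross_ratio_space_def vertex_conditions_iff_weak by blast
  then show ?thesis
    unfolding Let_def by (auto intro!: closed_INT closed_Wprod_conditions continuous_intros)
qed

lemma proper_map_inclusion_closedin:
  "closedin X S \<Longrightarrow> proper_map (subtopology X S) X (\<lambda>x. x)"
  using proper_map_inclusion[of S X] closedin_subset closed_Int_compactin by (fastforce simp: id_def)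

theorem lemma3p2:
  fixes g :: nat and \<sigma> :: "'e::finite dart \<Rightarrow> 'e dart"
  assumes "g \<ge> 2"
    and "surface_graph_triangular g \<sigma>"
    and "lifts_to_triangulation \<sigma>"
  shows "proper_map (subtopology euclidean (cross_ratio_space \<sigma>)) euclidean (\<lambda>c. c)"
  using closed_cross_ratio_space[of \<sigma>] by (simp add: proper_map_inclusion_closedin)

end
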